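(* Let $Q_1,\dots,Q_4$ be quaternion division algebras over $F$ with $g_{ij},h_i,d\ge2$ for all indices, and $X=\prod_{i=1}^4\mathrm{SB}(Q_i)$. Let $1\le m\le3$, and let $i,j,k,l$ be such that $\{i,j,k,l\}=\{1,2,3,4\}$. Then: (1) If $d=2$ then $2\sum_{1\le p<q\le4}y_py_q\in\mathrm{Im}(\mathrm{res}^{2/3})$. If $h_l=2$ then $2(y_iy_j+y_iy_k+y_jy_k)\in\mathrm{Im}(\mathrm{res}^{2/3})$. (2) If $g_{ij}=2$ then $4y_iy_jy_k,4y_iy_jy_l\in\mathrm{Im}(\mathrm{res}^{3/4})$. If $h_l=2$ then $4y_iy_jy_k$ and $-4y_iy_jy_k+4\sum_{1\le p<q<r\le4}y_py_qy_r$ lie in $\mathrm{Im}(\mathrm{res}^{3/4})$. If $g_{ij}=g_{ik}=2$ then $4y_iy_jy_k,4y_iy_jy_l,4y_iy_ky_l\in\mathrm{Im}(\mathrm{res}^{3/4})$. If $d=2$, or $|G|\ge4$, or $|G\cap J_m|=2$ for some $m$, or $|G\cap K_i|=3$ for some $i$, then $4y_py_qy_r\in\mathrm{Im}(\mathrm{res}^{3/4})$ for all $1\le p<q<r\le4$. (3) If $d\in\{2,4\}$, or $|G|\ge1$, or $|H_2|\ge1$, then $8y_1y_2y_3y_4\in\Gamma^4(X)$. If $|G\cap J_m|=2$ for some $m$, then $4y_1y_2y_3y_4\in\Gamma^4(X)$.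
   Context: Let $Q_1,\dots,Q_4$ be quaternion algebras over a field $F$, $X=\prod_{i=1}^4\mathrm{SB}(Q_i)$, and $E$ a splitting field. Then $K(X_E)=\mathbb Z[x_1,\dots,x_4]/((x_1-1)^2,\dots,(x_4-1)^2)$, where $x_i$ is the pullback of the class of the tautological line bundle on the $i$-th projective line, and the restriction $K(X)\to K(X_E)$ is injective; we identify $K(X)$ with its image, which has $\mathbb Z$-basis $\{\operatorname{ind}(Q_1^{\otimes i_1}\otimes\cdots\otimes Q_4^{\otimes i_4})x_1^{i_1}\cdots x_4^{i_4}:0\le i_j\le1\}$. Put $y_i=x_i-1$. The gamma filtration $\Gamma^d$ is generated by products $\gamma_{d_1}(x_1)\cdots\gamma_{d_r}(x_r)$ with $x_s$ of rank $0$ and $\sum d_s\ge d$; $\Gamma^d(X_E)$ is spanned by monomials in the $y_i$ of degree $\ge d$, and $\mathrm{res}^{d/d+1}:\Gamma^{d/d+1}(X)\to\Gamma^{d/d+1}(X_E)$ is the induced map on quotients; a homogeneous degree-$d$ polynomial in the $y_i$ is said to lie in $\mathrm{Im}(\mathrm{res}^{d/d+1})$ if its class in $\Gamma^{d/d+1}(X_E)$ does. Notation: $g_{ij}=\operatorname{ind}(Q_i\otimes Q_j)$; $h_i=\operatorname{ind}(Q_j\otimes Q_k\otimes Q_l)$ where $\{i,j,k,l\}=\{1,2,3,4\}$; $d=\operatorname{ind}(Q_1\otimes Q_2\otimes Q_3\otimes Q_4)$; $H_m=\{i:h_i=m\}$; $J=\{12,13,14,23,24,34\}$ the set of index pairs;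 $J_1=\{12,34\}$, $J_2=\{13,24\}$, $J_3=\{14,23\}$; $K_i=\{jk,jl,kl\}$ where $\{j,k,l\}=\{1,2,3,4\}\setminus\{i\}$; $G=\{ij\in J: g_{ij}=2\}$. *)

theory Defs
  imports Main
begin

text \<open>Concrete model of K(X_E) = Z[x_1..x_4]/((x_i-1)^2) with y_i = x_i - 1.
  An element is stored by its coefficients in the Z-basis of squarefree
  y-monomials y^T (T a subset of {1,2,3,4}); y_i^2 = 0.\<close>

type_synonym kel = "nat set \<Rightarrow> int"

definition idx4 :: "nat set" where "idx4 = {1,2,3,4}"

definition kzero :: kel where "kzero = (\<lambda>T. 0)"
definition kone :: kel where "kone = (\<lambda>T. if T = {} then 1 else 0)"
definition kadd :: "kel \<Rightarrow> kel \<Rightarrow> kel" where "kadd f g = (\<lambda>T. f T + g T)"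
definition kneg :: "kel \<Rightarrow> kel" where "kneg f = (\<lambda>T. - f T)"
definition ksmul :: "int \<Rightarrow> kel \<Rightarrow> kel" where "ksmul c f = (\<lambda>T. c * f T)"

text \<open>Multiplication: y^A * y^B = y^(A \<union> B) if A, B disjoint, and 0 otherwise.\<close>
definition kmul :: "kel \<Rightarrow> kel \<Rightarrow> kel" where
  "kmul f g = (\<lambda>T. \<Sum>A\<in>Pow T. f A * g (T - A))"

fun kpow :: "kel \<Rightarrow> nat \<Rightarrow> kel" where
  "kpow u 0 = kone"
| "kpow u (Suc k) = kmul u (kpow u k)"

text \<open>The monomial y^S, and x^S = prod_{i in S} x_i = prod_{i in S} (1 + y_i).\<close>
definition ymon :: "nat set \<Rightarrow> kel" where "ymon S = (\<lambda>T. if T = S then 1 else 0)"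
definition xmon :: "nat set \<Rightarrow> kel" where "xmon S = (\<lambda>T. if T \<subseteq> S then 1 else 0)"

definition esym :: "nat \<Rightarrow> kel" where
  "esym k = (\<lambda>T. if T \<subseteq> idx4 \<and> card T = k then 1 else 0)"

definition xcomb :: "(nat set \<Rightarrow> int) \<Rightarrow> kel" where
  "xcomb n = (\<lambda>T. \<Sum>S\<in>Pow idx4. n S * xmon S T)"

definition rank_x :: "(nat set \<Rightarrow> int) \<Rightarrow> int" where
  "rank_x n = (\<Sum>S\<in>Pow idx4. n S)"

text \<open>Formal power series in t with coefficients in K(X_E).\<close>
type_synonym kps = "nat \<Rightarrow> kel"

definition ps_one :: kps where "ps_one = (\<lambda>k. if k = 0 then kone else kzero)"
definition ps_mul :: "kps \<Rightarrow> kps \<Rightarrow> kps" where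
  "ps_mul P Q = (\<lambda>n T. \<Sum>k\<le>n. kmul (P k) (Q (n - k)) T)"

text \<open>(1 + u t)^m for an integer m (u nilpotent), via generalized binomial coefficients
  (ibinom m k = m(m-1)...(m-k+1)/k!, an exact division).\<close>
definition ibinom :: "int \<Rightarrow> nat \<Rightarrow> int" where
  "ibinom m k = (\<Prod>i<k. m - int i) div fact k"

definition binom_ps :: "kel \<Rightarrow> int \<Rightarrow> kps" where
  "binom_ps u m = (\<lambda>k. ksmul (ibinom m k) (kpow u k))"

definition subsets4 :: "nat set list" where
  "subsets4 = map set (subseqs [1,2,3,4])"

text \<open>Gamma series of a rank-zero element a = sum_S n(S) x^S = sum_S n(S) (x^S - 1):
  gamma_t(a) = prod_S gamma_t(x^S - 1)^(n S), with gamma_t(L - 1) = 1 + (L - 1) t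
  for a line bundle L (x^S is a line bundle class).\<close>
definition gamma_ps :: "(nat set \<Rightarrow> int) \<Rightarrow> kps" where
  "gamma_ps n = foldr ps_mul
     (map (\<lambda>S. binom_ps (kadd (xmon S) (kneg kone)) (n S)) subsets4) ps_one"

definition gamma_op :: "nat \<Rightarrow> (nat set \<Rightarrow> int) \<Rightarrow> kel" where
  "gamma_op k n = gamma_ps n k"

text \<open>ind S = ind of the tensor product of Q_i, i in S. Elements of K(X) are
  sum_S c(S) ind(S) x^S; their x-coordinates are given by kx_coords.\<close>
definition kx_coords :: "(nat set \<Rightarrow> nat) \<Rightarrow> (nat set \<Rightarrow> int) \<Rightarrow> (nat set \<Rightarrow> int)" where
  "kx_coords ind c = (\<lambda>S. c S * int (ind S))"

definition in_KX :: "(nat set \<Rightarrow> nat) \<Rightarrow> kel \<Rightarrow> bool" where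
  "in_KX ind a \<longleftrightarrow> (\<exists>c. a = xcomb (kx_coords ind c))"

text \<open>Gamma filtration Gamma^d(X): the subgroup generated by products
  gamma_{d_1}(a_1) ... gamma_{d_r}(a_r), a_s in K(X) of rank 0, sum d_s \<ge> d.
  A factor is given as (c, d_s) where c are the K(X)-coordinates of a_s.\<close>
definition gamma_prod :: "(nat set \<Rightarrow> nat) \<Rightarrow> ((nat set \<Rightarrow> int) \<times> nat) list \<Rightarrow> kel" where
  "gamma_prod ind fs = foldr (\<lambda>(c, k) acc. kmul (gamma_op k (kx_coords ind c)) acc) fs kone"

inductive_set gamma_filt :: "(nat set \<Rightarrow> nat) \<Rightarrow> nat \<Rightarrow> kel set"
  for ind :: "nat set \<Rightarrow> nat" and d :: nat where
  zero: "kzero \<in> gamma_filt ind d"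
| gen: "\<lbrakk>\<forall>(c, k) \<in> set fs. rank_x (kx_coords ind c) = 0; d \<le> (\<Sum>(c, k)\<leftarrow>fs. k)\<rbrakk>
        \<Longrightarrow> gamma_prod ind fs \<in> gamma_filt ind d"
| add: "\<lbrakk>a \<in> gamma_filt ind d; b \<in> gamma_filt ind d\<rbrakk> \<Longrightarrow> kadd a b \<in> gamma_filt ind d"
| neg: "a \<in> gamma_filt ind d \<Longrightarrow> kneg a \<in> gamma_filt ind d"

text \<open>Gamma^d(X_E) is spanned by y-monomials of degree \<ge> d. A homogeneous degree-d
  polynomial P lies in Im(res^{d/d+1}) iff some z in Gamma^d(X) satisfies
  z - P in Gamma^{d+1}(X_E).\<close>
definition in_GammaE :: "nat \<Rightarrow> kel \<Rightarrow> bool" where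
  "in_GammaE d f \<longleftrightarrow> (\<forall>T. card T < d \<longrightarrow> f T = 0)"

definition in_im_res :: "(nat set \<Rightarrow> nat) \<Rightarrow> nat \<Rightarrow> kel \<Rightarrow> bool" where
  "in_im_res ind d P \<longleftrightarrow> (\<exists>z \<in> gamma_filt ind d. in_GammaE (Suc d) (kadd z (kneg P)))"

text \<open>Index data: g_ij = ind {i,j}, h_l = ind (idx4 - {l}), d = ind idx4.\<close>
definition Jset :: "nat set set" where "Jset = {P. P \<subseteq> idx4 \<and> card P = 2}"
definition J1 :: "nat set set" where "J1 = {{1,2},{3,4}}"
definition J2 :: "nat set set" where "J2 = {{1,3},{2,4}}"
definition J3 :: "nat set set" where "J3 = {{1,4},{2,3}}"
definition Jm :: "nat \<Rightarrow> nat set set" where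
  "Jm m = (if m = 1 then J1 else if m = 2 then J2 else J3)"
definition Kset :: "nat \<Rightarrow> nat set set" where "Kset i = {P \<in> Jset. i \<notin> P}"
definition Gset :: "(nat set \<Rightarrow> nat) \<Rightarrow> nat set set" where
  "Gset ind = {P \<in> Jset. ind P = 2}"
definition Hset :: "(nat set \<Rightarrow> nat) \<Rightarrow> nat \<Rightarrow> nat set" where
  "Hset ind m = {i \<in> idx4. ind (idx4 - {i}) = m}"

text \<open>Index data arising from four quaternion division algebras with g, h, d \<ge> 2:
  the known constraints (Brauer classes of order 2, so [Q^S][Q^T] = [Q^(S \<triangle> T)]).\<close>
definition quat_index_data :: "(nat set \<Rightarrow> nat) \<Rightarrow> bool" where
  "quat_index_data ind \<longleftrightarrow>
     ind {} = 1 \<and>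
     (\<forall>i \<in> idx4. ind {i} = 2) \<and>
     (\<forall>S \<subseteq> idx4. (\<exists>e. ind S = 2 ^ e) \<and> ind S dvd 2 ^ card S) \<and>
     (\<forall>S \<subseteq> idx4. \<forall>T \<subseteq> idx4. ind ((S - T) \<union> (T - S)) dvd ind S * ind T)"

end

theory Submission
  imports Defs
begin

text \<open>Every element in question is produced explicitly from gamma operations. For the line
  bundle class x^S the gamma series of x^S - 1 is 1 + (x^S - 1) t, hence
  gamma_k(n (x^S - 1)) = binom(n, k) (x^S - 1)^k, and ind(S) (x^S - 1) lies in K(X). Since
  (x^S - 1)^2 = sum over nonempty T \<subseteq> S of (2^|T| - 2) y^T, an index ind(S) = 2 makes
  gamma_2(2 (x^S - 1)) equal to twice the elementary symmetric function of degree 2 in the y_i,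
  i \<in> S, up to higher terms, and multiplying such factors with gamma_1(2 (x_i - 1)) = 2 y_i
  gives the claimed multiples of monomials. The conditions on G, J_m and K_i in (2) are exactly
  what makes every triple of indices contain a pair of index 2.\<close>

section \<open>The ring structure of K(X_E)\<close>

text \<open>kone is a unit of kmul only on elements vanishing at infinite index sets; all products
  are of this kind.\<close>
definition fin_supp :: "kel \<Rightarrow> bool" where
  "fin_supp f \<longleftrightarrow> (\<forall>T. infinite T \<longrightarrow> f T = 0)"

lemma kmul_empty: "kmul f g {} = f {} * g {}"
  by (simp add: kmul_def)

lemma kmul_infinite: "infinite T \<Longrightarrow> kmul f g T = 0"
  by (simp add: kmul_def)

lemma kmul_insert:
  assumes "finite A" "a \<notin> A"
  shows "kmul f g (insert a A) = kmul f (\<lambda>B. g (insert a B)) A + kmul (\<lambda>B. f (insert a B)) g A"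
proof -
  have disj: "Pow A \<inter> insert a ` Pow A = {}" using assms by auto
  have inj: "inj_on (insert a) (Pow A)" using assms unfolding inj_on_def
    by (metis Pow_iff insert_absorb insert_ident subset_iff)
  have "kmul f g (insert a A) = (\<Sum>B\<in>Pow A. f B * g (insert a A - B))
      + (\<Sum>B\<in>insert a ` Pow A. f B * g (insert a A - B))"
    unfolding kmul_def Pow_insert using disj assms by (simp add: sum.union_disjoint)
  also have "(\<Sum>B\<in>Pow A. f B * g (insert a A - B)) = (\<Sum>B\<in>Pow A. f B * g (insert a (A - B)))"
    by (rule sum.cong) (use assms in \<open>auto simp: insert_Diff_if\<close>)
  also have "(\<Sum>B\<in>insert a ` Pow A. f B * g (insert a A - B))
      = (\<Sum>C\<in>Pow A. f (insert a C) * g (insert a A - insert a C))"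
    by (simp add: sum.reindex[OF inj])
  also have "\<dots> = (\<Sum>C\<in>Pow A. f (insert a C) * g (A - C))"
    by (rule sum.cong) (use assms in auto)
  finally show ?thesis by (simp add: kmul_def)
qed

lemma fin_supp_kmul: "fin_supp (kmul f g)"
  by (simp add: fin_supp_def kmul_infinite)

lemma fin_supp_kone: "fin_supp kone"
  by (auto simp: fin_supp_def kone_def)

lemma fin_supp_kzero: "fin_supp kzero"
  by (simp add: fin_supp_def kzero_def)

lemma fin_supp_ksmul: "fin_supp f \<Longrightarrow> fin_supp (ksmul c f)"
  by (simp add: fin_supp_def ksmul_def)

lemma fin_supp_kpow: "fin_supp (kpow u k)"
  by (cases k) (simp_all add: fin_supp_kone fin_supp_kmul)

lemma fin_supp_ymon: "finite S \<Longrightarrow> fin_supp (ymon S)"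
  by (simp add: fin_supp_def ymon_def)

lemma kmul_kone_left: "fin_supp f \<Longrightarrow> kmul kone f = f"
proof
  fix T assume f: "fin_supp f"
  show "kmul kone f T = f T"
  proof (cases "finite T")
    case True
    have "kmul kone f T = (\<Sum>B\<in>Pow T. if B = {} then f (T - B) else 0)"
      unfolding kmul_def kone_def by (rule sum.cong) auto
    with True show ?thesis by (simp add: sum.delta)
  qed (use f in \<open>simp add: fin_supp_def kmul_infinite\<close>)
qed

lemma kmul_kone_right: "fin_supp f \<Longrightarrow> kmul f kone = f"
proof
  fix T assume f: "fin_supp f"
  show "kmul f kone T = f T"
  proof (cases "finite T")
    case True
    have "kmul f kone T = (\<Sum>B\<in>Pow T. if B = T then f B else 0)"
      unfolding kmul_def kone_def by (rule sum.cong) auto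
    with True show ?thesis by (simp add: sum.delta)
  qed (use f in \<open>simp add: fin_supp_def kmul_infinite\<close>)
qed

lemma kmul_kzero_left: "kmul kzero f = kzero"
  by (simp add: kmul_def kzero_def fun_eq_iff)

lemma kmul_ksmul_left: "kmul (ksmul c f) g = ksmul c (kmul f g)"
  by (simp add: kmul_def ksmul_def fun_eq_iff sum_distrib_left mult.assoc)

lemma kmul_ksmul_right: "kmul f (ksmul c g) = ksmul c (kmul f g)"
  by (simp add: kmul_def ksmul_def fun_eq_iff sum_distrib_left algebra_simps)

lemma ksmul_ksmul: "ksmul a (ksmul b f) = ksmul (a * b) f"
  by (simp add: ksmul_def fun_eq_iff)

lemma ksmul_one: "ksmul 1 f = f"
  by (simp add: ksmul_def)

lemma kmul_assoc: "kmul f (kmul g h) = kmul (kmul f g) h"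
proof
  fix T
  show "kmul f (kmul g h) T = kmul (kmul f g) h T"
  proof (cases "finite T")
    case fin: True
    have Un_Diff_disjoint: "\<And>A B. B \<subseteq> T - A \<Longrightarrow> A \<union> B - A = B" by blast
    have "kmul f (kmul g h) T = (\<Sum>(A,B)\<in>Sigma (Pow T) (\<lambda>A. Pow (T - A)). f A * (g B * h (T - A - B)))"
      using fin by (simp add: kmul_def sum_distrib_left sum.Sigma)
    also have "\<dots> = (\<Sum>(C,A)\<in>Sigma (Pow T) Pow. f A * (g (C - A) * h (T - A - (C - A))))"
      using Un_Diff_disjoint
      by (intro sum.reindex_bij_witness[where j = "\<lambda>(A,B). (A \<union> B, A)" and i = "\<lambda>(C,A). (A, C - A)"])
        auto
    also have "\<dots> = (\<Sum>(C,A)\<in>Sigma (Pow T) Pow. f A * g (C - A) * h (T - C))"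
      by (rule sum.cong) (auto simp: mult.assoc intro!: arg_cong[where f = h])
    also have "\<dots> = kmul (kmul f g) h T"
      using fin by (simp add: kmul_def sum_distrib_right sum.Sigma finite_subset)
    finally show ?thesis .
  qed (simp add: kmul_infinite)
qed

lemma kpow_two: "fin_supp u \<Longrightarrow> kpow u 2 = kmul u u"
  by (simp add: numeral_eq_Suc kmul_kone_right)

lemma kmul_ymon_singleton_right:
  "kmul f (ymon {x}) T = (if finite T \<and> x \<in> T then f (T - {x}) else 0)"
proof (cases "finite T \<and> x \<in> T")
  case True
  have "kmul f (ymon {x}) T = (\<Sum>B\<in>Pow T. if B = T - {x} then f B else 0)"
    unfolding kmul_def ymon_def by (rule sum.cong) (use True in auto)
  with True show ?thesis by (simp add: sum.delta)
next
  case False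
  then show ?thesis
    by (cases "finite T") (auto simp: kmul_def ymon_def kmul_infinite intro!: sum.neutral)
qed

lemma kmul_ymon_singleton_left:
  "kmul (ymon {x}) f T = (if finite T \<and> x \<in> T then f (T - {x}) else 0)"
proof (cases "finite T \<and> x \<in> T")
  case True
  have "kmul (ymon {x}) f T = (\<Sum>B\<in>Pow T. if B = {x} then f (T - {x}) else 0)"
    unfolding kmul_def ymon_def by (rule sum.cong) (use True in auto)
  with True show ?thesis by (simp add: sum.delta)
next
  case False
  then show ?thesis
    by (cases "finite T") (auto simp: kmul_def ymon_def kmul_infinite intro!: sum.neutral)
qed

section \<open>Gamma operations of line bundle classes\<close>

definition xmon_minus_one :: "nat set \<Rightarrow> kel" where
  "xmon_minus_one S = kadd (xmon S) (kneg kone)"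

lemma xmon_minus_one_apply: "xmon_minus_one S T = (if T \<subseteq> S \<and> T \<noteq> {} then 1 else 0)"
  by (simp add: xmon_minus_one_def kadd_def kneg_def xmon_def kone_def)

lemma xmon_minus_one_empty: "xmon_minus_one {} = kzero"
  by (simp add: xmon_minus_one_apply kzero_def fun_eq_iff)

lemma xmon_minus_one_singleton: "xmon_minus_one {x} = ymon {x}"
  by (auto simp: xmon_minus_one_apply ymon_def fun_eq_iff)

lemma fin_supp_xmon_minus_one: "finite S \<Longrightarrow> fin_supp (xmon_minus_one S)"
  by (auto simp: fin_supp_def xmon_minus_one_apply dest: finite_subset)

lemma card_proper_nonempty_subsets:
  assumes "finite T" "T \<noteq> {}"
  shows "card {B \<in> Pow T. B \<noteq> {} \<and> B \<noteq> T} = 2 ^ card T - 2"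
proof -
  have "{B \<in> Pow T. B \<noteq> {} \<and> B \<noteq> T} = Pow T - {{}, T}" by auto
  moreover have "card (Pow T - {{}, T}) = card (Pow T) - card {{}, T}"
    by (rule card_Diff_subset) auto
  ultimately show ?thesis using assms by (simp add: card_Pow)
qed

text \<open>The square of x^S - 1: a nonempty T \<subseteq> S arises from the 2^|T| - 2 splittings of T into
  two nonempty parts.\<close>
lemma kmul_xmon_minus_one_self:
  "kmul (xmon_minus_one S) (xmon_minus_one S) T
     = (if finite T \<and> T \<subseteq> S \<and> T \<noteq> {} then 2 ^ card T - 2 else 0)"
proof (cases "finite T \<and> T \<subseteq> S")
  case True
  have "kmul (xmon_minus_one S) (xmon_minus_one S) T
      = (\<Sum>B\<in>Pow T. if B \<noteq> {} \<and> B \<noteq> T then 1 else 0)"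
    unfolding kmul_def xmon_minus_one_apply by (rule sum.cong) (use True in auto)
  also have "\<dots> = int (card (Pow T \<inter> {B. B \<noteq> {} \<and> B \<noteq> T}))"
    using True by (simp add: sum.If_cases)
  also have "Pow T \<inter> {B. B \<noteq> {} \<and> B \<noteq> T} = {B \<in> Pow T. B \<noteq> {} \<and> B \<noteq> T}"
    by blast
  finally have sq: "kmul (xmon_minus_one S) (xmon_minus_one S) T
      = int (card {B \<in> Pow T. B \<noteq> {} \<and> B \<noteq> T})" .
  show ?thesis
  proof (cases "T = {}")
    case False
    with True have "(2::nat) ^ 1 \<le> 2 ^ card T"
      by (intro power_increasing) (auto simp: Suc_le_eq card_gt_0_iff)
    with sq card_proper_nonempty_subsets[of T] True False show ?thesis by (simp add: of_nat_diff)
  qed (use sq in simp)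
next
  case False
  show ?thesis
  proof (cases "finite T")
    case True
    with False obtain x where "x \<in> T" "x \<notin> S" by auto
    then have "kmul (xmon_minus_one S) (xmon_minus_one S) T = 0"
      unfolding kmul_def xmon_minus_one_apply by (intro sum.neutral) auto
    with False True show ?thesis by simp
  qed (simp add: kmul_infinite)
qed

lemma ps_mul_one_left: "(\<And>k. fin_supp (Q k)) \<Longrightarrow> ps_mul ps_one Q = Q"
proof (intro ext)
  fix n T assume Q: "\<And>k. fin_supp (Q k)"
  have "ps_mul ps_one Q n T = (\<Sum>k\<le>n. if k = 0 then kmul kone (Q (n - k)) T else 0)"
    unfolding ps_mul_def ps_one_def by (rule sum.cong) (auto simp: kmul_def kzero_def)
  with Q show "ps_mul ps_one Q n T = Q n T" by (simp add: sum.delta kmul_kone_left)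
qed

lemma ps_mul_one_right: "(\<And>k. fin_supp (Q k)) \<Longrightarrow> ps_mul Q ps_one = Q"
proof (intro ext)
  fix n T assume Q: "\<And>k. fin_supp (Q k)"
  have "ps_mul Q ps_one n T = (\<Sum>k\<le>n. if k = n then kmul (Q k) kone T else 0)"
    unfolding ps_mul_def ps_one_def by (rule sum.cong) (auto simp: kmul_def kzero_def)
  with Q show "ps_mul Q ps_one n T = Q n T" by (simp add: sum.delta kmul_kone_right)
qed

lemma fin_supp_ps_one: "fin_supp (ps_one k)"
  by (simp add: ps_one_def fin_supp_kone fin_supp_kzero)

lemma foldr_ps_mul_ps_one: "(\<And>x. x \<in> set xs \<Longrightarrow> F x = ps_one) \<Longrightarrow> foldr ps_mul (map F xs) ps_one = ps_one"
  by (induction xs) (auto simp: ps_mul_one_left fin_supp_ps_one)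

lemma foldr_ps_mul_single:
  assumes "distinct xs" "y \<in> set xs" "\<And>x. x \<in> set xs \<Longrightarrow> x \<noteq> y \<Longrightarrow> F x = ps_one"
    "\<And>k. fin_supp (F y k)"
  shows "foldr ps_mul (map F xs) ps_one = F y"
  using assms
proof (induction xs)
  case (Cons x xs)
  show ?case
  proof (cases "x = y")
    case True
    with Cons.prems have "foldr ps_mul (map F xs) ps_one = ps_one"
      by (intro foldr_ps_mul_ps_one) auto
    with True Cons.prems show ?thesis by (simp add: ps_mul_one_right)
  next
    case False
    with Cons have "foldr ps_mul (map F xs) ps_one = F y" by auto
    with False Cons.prems show ?thesis by (simp add: ps_mul_one_left)
  qed
qed simp

lemma binom_ps_zero_exponent: "binom_ps u 0 = ps_one"
proof -
  have "ibinom 0 k = 0" if "k > 0" for k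
    using that unfolding ibinom_def by (subst prod_zero) (auto intro!: bexI[where x = 0])
  then show ?thesis
    by (auto simp: binom_ps_def ps_one_def ibinom_def ksmul_def kzero_def fun_eq_iff)
qed

lemma binom_ps_kzero: "binom_ps kzero m = ps_one"
proof (intro ext)
  fix k T
  show "binom_ps kzero m k T = ps_one k T"
    by (cases k) (simp_all add: binom_ps_def ps_one_def ibinom_def ksmul_def kmul_kzero_left,
      simp_all add: kzero_def)
qed

lemma fin_supp_binom_ps: "fin_supp (binom_ps u m k)"
  by (simp add: binom_ps_def fin_supp_ksmul fin_supp_kpow)

lemma set_subsets4: "set subsets4 = Pow idx4"
  unfolding subsets4_def idx4_def using subseqs_powset[of "[1,2,3,4::nat]"] by simp

lemma distinct_subsets4: "distinct subsets4"
  unfolding subsets4_def by (rule distinct_set_subseqs) simp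

definition line_coords :: "nat set \<Rightarrow> int \<Rightarrow> nat set \<Rightarrow> int" where
  "line_coords S m = (\<lambda>T. if T = S then m else if T = {} then -m else 0)"

lemma rank_x_line_coords:
  assumes "S \<subseteq> idx4" "S \<noteq> {}"
  shows "rank_x (line_coords S m) = 0"
proof -
  have "rank_x (line_coords S m)
      = (\<Sum>T\<in>Pow idx4. (if T = S then m else 0) + (if T = {} then -m else 0))"
    unfolding rank_x_def line_coords_def by (rule sum.cong) (use assms in auto)
  also have "\<dots> = 0" using assms by (simp add: sum.distrib sum.delta idx4_def)
  finally show ?thesis .
qed

lemma gamma_op_line_coords:
  assumes "S \<subseteq> idx4" "S \<noteq> {}"
  shows "gamma_op k (line_coords S m) = ksmul (ibinom m k) (kpow (xmon_minus_one S) k)"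
proof -
  have "gamma_ps (line_coords S m) = binom_ps (xmon_minus_one S) m"
    unfolding gamma_ps_def xmon_minus_one_def[symmetric]
    using assms distinct_subsets4 set_subsets4
    by (subst foldr_ps_mul_single[where y = S])
      (auto simp: line_coords_def binom_ps_zero_exponent xmon_minus_one_empty binom_ps_kzero
        fin_supp_binom_ps)
  then show ?thesis by (simp add: gamma_op_def binom_ps_def)
qed

text \<open>K(X)-coordinates of t ind(S) (x^S - 1).\<close>
definition line_kx_coords :: "(nat set \<Rightarrow> nat) \<Rightarrow> nat set \<Rightarrow> int \<Rightarrow> nat set \<Rightarrow> int" where
  "line_kx_coords ind S t = (\<lambda>T. if T = S then t else if T = {} then - t * int (ind S) else 0)"

lemma kx_coords_line_kx_coords:
  "ind {} = 1 \<Longrightarrow> S \<noteq> {} \<Longrightarrow> kx_coords ind (line_kx_coords ind S t) = line_coords S (t * int (ind S))"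
  by (auto simp: kx_coords_def line_kx_coords_def line_coords_def fun_eq_iff)

text \<open>The product of the gamma_k(t ind(S) (x^S - 1)) over a list of triples (S, t, k).\<close>
definition gamma_terms :: "(nat set \<Rightarrow> nat) \<Rightarrow> (nat set \<times> int \<times> nat) list \<Rightarrow> kel" where
  "gamma_terms ind fs = gamma_prod ind (map (\<lambda>(S, t, k). (line_kx_coords ind S t, k)) fs)"

lemma gamma_terms_Nil: "gamma_terms ind [] = kone"
  by (simp add: gamma_terms_def gamma_prod_def)

lemma gamma_terms_Cons:
  "\<lbrakk>ind {} = 1; S \<subseteq> idx4; S \<noteq> {}\<rbrakk> \<Longrightarrow> gamma_terms ind ((S, t, k) # fs)
     = kmul (ksmul (ibinom (t * int (ind S)) k) (kpow (xmon_minus_one S) k)) (gamma_terms ind fs)"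
  by (simp add: gamma_terms_def gamma_prod_def kx_coords_line_kx_coords gamma_op_line_coords)

lemma gamma_terms_in_gamma_filt:
  assumes "ind {} = 1" "\<forall>(S, t, k) \<in> set fs. S \<subseteq> idx4 \<and> S \<noteq> {}" "d \<le> (\<Sum>(S, t, k)\<leftarrow>fs. k)"
  shows "gamma_terms ind fs \<in> gamma_filt ind d"
  unfolding gamma_terms_def
proof (rule gamma_filt.gen)
  show "\<forall>(c, k)\<in>set (map (\<lambda>(S, t, k). (line_kx_coords ind S t, k)) fs). rank_x (kx_coords ind c) = 0"
  proof -
    have "rank_x (kx_coords ind (line_kx_coords ind S t)) = 0" if "(S, t, k) \<in> set fs" for S t k
    proof -
      from that assms(2) have "S \<subseteq> idx4" "S \<noteq> {}" by auto
      then show ?thesis by (simp add: kx_coords_line_kx_coords[of ind, OF assms(1)] rank_x_line_coords)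
    qed
    then show ?thesis by auto
  qed
  have "(\<Sum>(c, k)\<leftarrow>map (\<lambda>(S, t, k). (line_kx_coords ind S t, k)) fs. k) = (\<Sum>(S, t, k)\<leftarrow>fs. k)"
    by (induction fs) auto
  with assms(3) show "d \<le> (\<Sum>(c, k)\<leftarrow>map (\<lambda>(S, t, k). (line_kx_coords ind S t, k)) fs. k)"
    by simp
qed

lemma in_im_resI:
  assumes "ind {} = 1" "\<forall>(S, t, k) \<in> set fs. S \<subseteq> idx4 \<and> S \<noteq> {}" "d \<le> (\<Sum>(S, t, k)\<leftarrow>fs. k)"
    and "in_GammaE (Suc d) (kadd (gamma_terms ind fs) (kneg P))"
  shows "in_im_res ind d P"
  using assms gamma_terms_in_gamma_filt unfolding in_im_res_def by blast

lemma ksmul_of_nat_in_gamma_filt: "a \<in> gamma_filt ind d \<Longrightarrow> ksmul (int n) a \<in> gamma_filt ind d"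
proof (induction n)
  case 0
  have "ksmul (int 0) a = kzero" by (simp add: ksmul_def kzero_def)
  then show ?case using gamma_filt.zero by simp
next
  case (Suc n)
  have "ksmul (int (Suc n)) a = kadd (ksmul (int n) a) a"
    by (simp add: ksmul_def kadd_def fun_eq_iff algebra_simps)
  then show ?case using Suc gamma_filt.add by simp
qed

definition supported_in :: "nat set \<Rightarrow> kel \<Rightarrow> bool" where
  "supported_in A f \<longleftrightarrow> (\<forall>T. \<not> T \<subseteq> A \<longrightarrow> f T = 0)"

lemma supported_in_kmul:
  assumes f: "supported_in A f" and g: "supported_in A g"
  shows "supported_in A (kmul f g)"
  unfolding supported_in_def
proof (intro allI impI)
  fix T assume "\<not> T \<subseteq> A"
  then obtain x where x: "x \<in> T" "x \<notin> A" by auto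
  have "f B * g (T - B) = 0" for B
  proof -
    have "\<not> B \<subseteq> A \<or> \<not> T - B \<subseteq> A" using x by blast
    with f g show ?thesis unfolding supported_in_def by (metis mult_eq_0_iff)
  qed
  then show "kmul f g T = 0" unfolding kmul_def by (intro sum.neutral) auto
qed

lemma supported_in_kone: "supported_in A kone"
  by (simp add: supported_in_def kone_def)

lemma supported_in_xmon_minus_one: "S \<subseteq> A \<Longrightarrow> supported_in A (xmon_minus_one S)"
  by (auto simp: supported_in_def xmon_minus_one_apply)

lemma supported_in_ymon: "S \<subseteq> A \<Longrightarrow> supported_in A (ymon S)"
  by (auto simp: supported_in_def ymon_def)

lemma supported_in_esym: "idx4 \<subseteq> A \<Longrightarrow> supported_in A (esym n)"
  by (auto simp: supported_in_def esym_def)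

lemma supported_in_kadd: "supported_in A f \<Longrightarrow> supported_in A g \<Longrightarrow> supported_in A (kadd f g)"
  by (simp add: supported_in_def kadd_def)

lemma supported_in_kneg: "supported_in A f \<Longrightarrow> supported_in A (kneg f)"
  by (simp add: supported_in_def kneg_def)

lemma supported_in_ksmul: "supported_in A f \<Longrightarrow> supported_in A (ksmul c f)"
  by (simp add: supported_in_def ksmul_def)

lemma supported_in_kpow: "supported_in A f \<Longrightarrow> supported_in A (kpow f n)"
  by (induction n) (simp_all add: supported_in_kone supported_in_kmul)

lemmas supported_in_intros = supported_in_kmul supported_in_kone supported_in_kpow supported_in_xmon_minus_one
  supported_in_ymon supported_in_esym supported_in_kadd supported_in_kneg supported_in_ksmul

lemma kel_eqI_supported_in:
  "supported_in A f \<Longrightarrow> supported_in A g \<Longrightarrow> (\<forall>T. T \<subseteq> A \<longrightarrow> f T = g T) \<Longrightarrow> f = g"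
  unfolding supported_in_def by (metis ext)

lemma in_GammaE_supported_inI:
  "supported_in A f \<Longrightarrow> (\<forall>T. T \<subseteq> A \<longrightarrow> card T < d \<longrightarrow> f T = 0) \<Longrightarrow> in_GammaE d f"
  unfolding supported_in_def in_GammaE_def by metis

lemma all_subsets_insert:
  "(\<forall>T. T \<subseteq> insert a A \<longrightarrow> P T) \<longleftrightarrow> (\<forall>T. T \<subseteq> A \<longrightarrow> P T \<and> P (insert a T))"
proof
  assume "\<forall>T. T \<subseteq> A \<longrightarrow> P T \<and> P (insert a T)"
  moreover have "T = insert a (T - {a}) \<and> T - {a} \<subseteq> A \<or> T \<subseteq> A" if "T \<subseteq> insert a A" for T
    using that by blast
  ultimately show "\<forall>T. T \<subseteq> insert a A \<longrightarrow> P T" by metis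
qed blast

lemma all_subsets_empty: "(\<forall>T. T \<subseteq> {} \<longrightarrow> P T) \<longleftrightarrow> P {}"
  by auto

lemmas gamma_terms_normalize = gamma_terms_Nil gamma_terms_Cons kmul_assoc
  kmul_ksmul_left kmul_ksmul_right ksmul_ksmul ksmul_one kmul_kone_right kpow_two numeral_eq_Suc
  xmon_minus_one_singleton fin_supp_kpow fin_supp_xmon_minus_one fin_supp_ymon fin_supp_kmul
  fin_supp_ksmul

lemma ksmul_apply: "ksmul c f T = c * f T"
  by (simp add: ksmul_def)

lemma kadd_apply: "kadd f g T = f T + g T"
  by (simp add: kadd_def)

lemma kneg_apply: "kneg f T = - f T"
  by (simp add: kneg_def)

lemma kone_apply: "kone T = (if T = {} then 1 else 0)"
  by (simp add: kone_def)

text \<open>Two inclusions rather than an equation: simp decides them on set literals far more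
  cheaply.\<close>
lemma ymon_apply: "ymon S T = (if T \<subseteq> S \<and> S \<subseteq> T then 1 else 0)"
  by (auto simp: ymon_def)

lemma esym_apply: "esym n T = (if T \<subseteq> idx4 \<and> card T = n then 1 else 0)"
  by (simp add: esym_def)

lemmas kel_eval = all_subsets_insert all_subsets_empty kmul_empty kmul_insert
  kmul_ymon_singleton_left kmul_ymon_singleton_right kmul_xmon_minus_one_self kpow_two
  fin_supp_xmon_minus_one xmon_minus_one_apply ymon_apply esym_apply ksmul_apply kadd_apply
  kneg_apply kone_apply insert_Diff_if

section \<open>Explicit elements of the gamma filtration\<close>

lemma quat_index_data_empty: "quat_index_data ind \<Longrightarrow> ind {} = 1"
  by (simp add: quat_index_data_def)

lemma quat_index_data_singleton: "quat_index_data ind \<Longrightarrow> x \<in> idx4 \<Longrightarrow> ind {x} = 2"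
  by (simp add: quat_index_data_def)

lemma ymon3_in_im_res_of_pair:
  assumes quat: "quat_index_data ind" and pqr: "distinct [p, q, r]" "{p, q, r} \<subseteq> idx4"
    and pq: "ind {p, q} = 2"
  shows "in_im_res ind 3 (ksmul 4 (ymon {p, q, r}))"
proof (rule in_im_resI[where fs = "[({p, q}, 1, 2), ({r}, 1, 1)]"])
  have witness: "gamma_terms ind [({p, q}, 1, 2), ({r}, 1, 1)]
      = ksmul 2 (kmul (kpow (xmon_minus_one {p, q}) 2) (ymon {r}))"
    using assms quat_index_data_empty[OF quat] quat_index_data_singleton[OF quat]
    by (simp add: gamma_terms_normalize ibinom_def)
  show "in_GammaE (Suc 3) (kadd (gamma_terms ind [({p, q}, 1, 2), ({r}, 1, 1)])
      (kneg (ksmul 4 (ymon {p, q, r}))))"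
    unfolding witness
    by (rule in_GammaE_supported_inI[where A = "{p, q, r}"],
      (intro supported_in_intros; simp), use pqr in \<open>simp add: kel_eval\<close>)
qed (use assms quat_index_data_empty in auto)

lemma ymon3_in_im_res_of_triple:
  assumes quat: "quat_index_data ind" and pqr: "distinct [p, q, r]" "{p, q, r} \<subseteq> idx4"
    and pqr_ind: "ind {p, q, r} = 2"
  shows "in_im_res ind 3 (ksmul 4 (ymon {p, q, r}))"
proof (rule in_im_resI[where fs = "[({p, q, r}, 1, 2), ({p}, 1, 1)]"])
  have witness: "gamma_terms ind [({p, q, r}, 1, 2), ({p}, 1, 1)]
      = ksmul 2 (kmul (kpow (xmon_minus_one {p, q, r}) 2) (ymon {p}))"
    using assms quat_index_data_empty[OF quat] quat_index_data_singleton[OF quat]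
    by (simp add: gamma_terms_normalize ibinom_def)
  show "in_GammaE (Suc 3) (kadd (gamma_terms ind [({p, q, r}, 1, 2), ({p}, 1, 1)])
      (kneg (ksmul 4 (ymon {p, q, r}))))"
    unfolding witness
    by (rule in_GammaE_supported_inI[where A = "{p, q, r}"],
      (intro supported_in_intros; simp), use pqr in \<open>simp add: kel_eval\<close>)
qed (use assms quat_index_data_empty in auto)

lemma esym3_in_im_res_of_triple:
  assumes quat: "quat_index_data ind" and pqrs: "distinct [p, q, r, s]" "idx4 = {p, q, r, s}"
    and pqr_ind: "ind {p, q, r} = 2"
  shows "in_im_res ind 3 (kadd (ksmul (-4) (ymon {p, q, r})) (ksmul 4 (esym 3)))"
proof (rule in_im_resI[where fs = "[({p, q, r}, 1, 2), ({s}, 1, 1)]"])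
  have witness: "gamma_terms ind [({p, q, r}, 1, 2), ({s}, 1, 1)]
      = ksmul 2 (kmul (kpow (xmon_minus_one {p, q, r}) 2) (ymon {s}))"
    using pqr_ind quat_index_data_empty[OF quat] quat_index_data_singleton[OF quat, of s]
    by (simp add: gamma_terms_normalize ibinom_def pqrs(2))
  show "in_GammaE (Suc 3) (kadd (gamma_terms ind [({p, q, r}, 1, 2), ({s}, 1, 1)])
      (kneg (kadd (ksmul (-4) (ymon {p, q, r})) (ksmul 4 (esym 3)))))"
    unfolding witness
    by (rule in_GammaE_supported_inI[where A = "{p, q, r, s}"],
      (intro supported_in_intros; simp add: pqrs(2)),
      use pqrs(1) in \<open>simp add: kel_eval pqrs(2)\<close>)
qed (use quat_index_data_empty[OF quat] in \<open>auto simp: pqrs(2)\<close>)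

lemma ymon2_sum_in_im_res_of_triple:
  assumes quat: "quat_index_data ind" and pqr: "distinct [p, q, r]" "{p, q, r} \<subseteq> idx4"
    and pqr_ind: "ind {p, q, r} = 2"
  shows "in_im_res ind 2 (ksmul 2 (kadd (ymon {p, q}) (kadd (ymon {p, r}) (ymon {q, r}))))"
proof (rule in_im_resI[where fs = "[({p, q, r}, 1, 2)]"])
  have witness: "gamma_terms ind [({p, q, r}, 1, 2)] = kpow (xmon_minus_one {p, q, r}) 2"
    using assms quat_index_data_empty[OF quat] by (simp add: gamma_terms_normalize ibinom_def)
  show "in_GammaE (Suc 2) (kadd (gamma_terms ind [({p, q, r}, 1, 2)])
      (kneg (ksmul 2 (kadd (ymon {p, q}) (kadd (ymon {p, r}) (ymon {q, r}))))))"
    unfolding witness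
    by (rule in_GammaE_supported_inI[where A = "{p, q, r}"],
      (intro supported_in_intros; simp), use pqr in \<open>simp add: kel_eval\<close>)
qed (use assms quat_index_data_empty in auto)

lemma esym2_in_im_res_of_total:
  assumes quat: "quat_index_data ind" and total: "ind idx4 = 2"
  shows "in_im_res ind 2 (ksmul 2 (esym 2))"
proof (rule in_im_resI[where fs = "[(idx4, 1, 2)]"])
  have witness: "gamma_terms ind [(idx4, 1, 2)] = kpow (xmon_minus_one idx4) 2"
    using assms quat_index_data_empty[OF quat] by (simp add: gamma_terms_normalize ibinom_def idx4_def)
  show "in_GammaE (Suc 2) (kadd (gamma_terms ind [(idx4, 1, 2)]) (kneg (ksmul 2 (esym 2))))"
    unfolding witness
    by (rule in_GammaE_supported_inI[where A = idx4],
      (intro supported_in_intros; simp), simp add: kel_eval idx4_def)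
qed (use assms quat_index_data_empty in \<open>auto simp: idx4_def\<close>)

lemma complement_ymon3_in_im_res_of_total:
  assumes quat: "quat_index_data ind" and pqrs: "distinct [p, q, r, s]" "idx4 = {p, q, r, s}"
    and total: "ind idx4 = 2"
  shows "in_im_res ind 3 (ksmul 4 (ymon {q, r, s}))"
proof -
  have ind: "ind {} = 1" "\<And>x. x \<in> idx4 \<Longrightarrow> ind {x} = 2"
    using quat_index_data_empty[OF quat] quat_index_data_singleton[OF quat] by simp_all
  have in4: "p \<in> idx4" "q \<in> idx4" "r \<in> idx4" "s \<in> idx4"
    using pqrs(2) by auto
  define W where "W x = gamma_terms ind [(idx4, 1, 2), ({x}, 1, 1)]" for x
  define V where "V a b c = gamma_terms ind [({a}, 1, 1), ({b}, 1, 1), ({c}, 1, 1)]" for a b c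
  have W_mem: "W x \<in> gamma_filt ind 3" if "x \<in> idx4" for x
    unfolding W_def using that ind by (intro gamma_terms_in_gamma_filt) (auto simp: idx4_def)
  have V_mem: "V a b c \<in> gamma_filt ind 3" if "a \<in> idx4" "b \<in> idx4" "c \<in> idx4" for a b c
    unfolding V_def using that ind by (intro gamma_terms_in_gamma_filt) auto
  let ?w = "\<lambda>x. ksmul 2 (kmul (kpow (xmon_minus_one idx4) 2) (ymon {x}))"
  let ?v = "\<lambda>a b c. ksmul 8 (kmul (kmul (ymon {a}) (ymon {b})) (ymon {c}))"
  have W_eq: "W x = ?w x" if "x \<in> idx4" for x
    unfolding W_def using that ind total by (simp add: gamma_terms_normalize ibinom_def idx4_def)
  have V_eq: "V a b c = ?v a b c" if "a \<in> idx4" "b \<in> idx4" "c \<in> idx4" for a b c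
    unfolding V_def using that ind by (simp add: gamma_terms_normalize ibinom_def)
  txt \<open>Modulo degree 4, W x is 4 y_x times the sum of the y_a y_b with a, b \<noteq> x, and V a b c is
    8 y_a y_b y_c; so W q + W r + W s is 12 y_q y_r y_s plus 8 times the three other triples.\<close>
  let ?z = "kadd (kadd (kadd (W q) (W r)) (W s))
    (kneg (kadd (kadd (kadd (V p q r) (V p q s)) (V p r s)) (V q r s)))"
  have z_eq: "?z = kadd (kadd (kadd (?w q) (?w r)) (?w s))
    (kneg (kadd (kadd (kadd (?v p q r) (?v p q s)) (?v p r s)) (?v q r s)))"
    using in4 by (simp add: W_eq V_eq)
  have "?z \<in> gamma_filt ind 3"
    using in4 by (intro gamma_filt.add gamma_filt.neg W_mem V_mem)
  moreover have "in_GammaE (Suc 3) (kadd ?z (kneg (ksmul 4 (ymon {q, r, s}))))"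
    unfolding z_eq
    by (rule in_GammaE_supported_inI[where A = "{p, q, r, s}"],
      (intro supported_in_intros; simp add: pqrs(2)), use pqrs(1) in \<open>simp add: kel_eval pqrs(2)\<close>)
  ultimately show ?thesis unfolding in_im_res_def by blast
qed

lemma eight_ymon4_in_gamma_filt_of_pair:
  assumes quat: "quat_index_data ind" and pqrs: "distinct [p, q, r, s]" "idx4 = {p, q, r, s}"
    and pq: "ind {p, q} = 2"
  shows "ksmul 8 (ymon idx4) \<in> gamma_filt ind 4"
proof -
  let ?fs = "[({p, q}, 1, 2), ({r}, 1, 1), ({s}, 1, 1)]"
  have ind: "ind {} = 1" "ind {r} = 2" "ind {s} = 2"
    using quat_index_data_empty[OF quat] quat_index_data_singleton[OF quat] pqrs(2) by auto
  have "gamma_terms ind ?fs = ksmul 4 (kmul (kmul (kpow (xmon_minus_one {p, q}) 2) (ymon {r})) (ymon {s}))"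
    using ind pq by (simp add: gamma_terms_normalize ibinom_def pqrs(2))
  also have "\<dots> = ksmul 8 (ymon idx4)"
    by (rule kel_eqI_supported_in[where A = idx4], (intro supported_in_intros; simp add: pqrs(2))+,
      use pqrs(1) in \<open>simp add: kel_eval pqrs(2)\<close>)
  finally show ?thesis
    using gamma_terms_in_gamma_filt[of ind ?fs 4] ind by (simp add: pqrs(2))
qed

lemma eight_ymon4_in_gamma_filt_of_triple:
  assumes quat: "quat_index_data ind" and pqrs: "distinct [p, q, r, s]" "idx4 = {p, q, r, s}"
    and pqr: "ind {p, q, r} = 2"
  shows "ksmul 8 (ymon idx4) \<in> gamma_filt ind 4"
proof -
  let ?fs = "[({p, q, r}, 1, 2), ({p}, 1, 1), ({s}, 1, 1)]"
  have ind: "ind {} = 1" "ind {p} = 2" "ind {s} = 2"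
    using quat_index_data_empty[OF quat] quat_index_data_singleton[OF quat] pqrs(2) by auto
  have "gamma_terms ind ?fs
      = ksmul 4 (kmul (kmul (kpow (xmon_minus_one {p, q, r}) 2) (ymon {p})) (ymon {s}))"
    using ind pqr by (simp add: gamma_terms_normalize ibinom_def pqrs(2))
  also have "\<dots> = ksmul 8 (ymon idx4)"
    by (rule kel_eqI_supported_in[where A = idx4], (intro supported_in_intros; simp add: pqrs(2))+,
      use pqrs(1) in \<open>simp add: kel_eval pqrs(2)\<close>)
  finally show ?thesis
    using gamma_terms_in_gamma_filt[of ind ?fs 4] ind by (simp add: pqrs(2))
qed

lemma eight_ymon4_in_gamma_filt_of_total:
  assumes quat: "quat_index_data ind" and total: "ind idx4 = 2"
  shows "ksmul 8 (ymon idx4) \<in> gamma_filt ind 4"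
proof -
  let ?fs = "[(idx4, 1, 2), ({1}, 1, 1), ({2}, 1, 1)]"
  have ind: "ind {} = 1" "ind {1} = 2" "ind {2} = 2"
    using quat_index_data_empty[OF quat] quat_index_data_singleton[OF quat] by (auto simp: idx4_def)
  have "gamma_terms ind ?fs
      = ksmul 4 (kmul (kmul (kpow (xmon_minus_one idx4) 2) (ymon {1})) (ymon {2}))"
    using ind total by (simp add: gamma_terms_normalize ibinom_def idx4_def)
  also have "\<dots> = ksmul 8 (ymon idx4)"
    by (rule kel_eqI_supported_in[where A = idx4], (intro supported_in_intros; simp add: idx4_def)+,
      simp add: kel_eval idx4_def)
  finally show ?thesis
    using gamma_terms_in_gamma_filt[of ind ?fs 4] ind by (simp add: idx4_def)
qed

lemma eight_ymon4_in_gamma_filt_of_total4: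
  assumes quat: "quat_index_data ind" and total: "ind idx4 = 4"
    and pairs: "ind {1, 2} = 4" "ind {3, 4} = 4"
  shows "ksmul 8 (ymon idx4) \<in> gamma_filt ind 4"
proof -
  let ?a = "gamma_terms ind [(idx4, 1, 4)]"
  let ?b = "gamma_terms ind [({1, 2}, -1, 2), ({3, 4}, -1, 2)]"
  have ind: "ind {} = 1" using quat_index_data_empty[OF quat] .
  have "?a \<in> gamma_filt ind 4" "?b \<in> gamma_filt ind 4"
    using ind by (auto intro!: gamma_terms_in_gamma_filt simp: idx4_def)
  then have "kadd (ksmul (int 17) ?a) (kneg ?b) \<in> gamma_filt ind 4"
    by (intro gamma_filt.add gamma_filt.neg ksmul_of_nat_in_gamma_filt)
  moreover have "?a = kpow (xmon_minus_one idx4) 4"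
    using ind total by (simp add: gamma_terms_normalize ibinom_def idx4_def)
  moreover have "?b = ksmul 100 (kmul (kpow (xmon_minus_one {1, 2}) 2) (kpow (xmon_minus_one {3, 4}) 2))"
    using ind pairs by (simp add: gamma_terms_normalize ibinom_def idx4_def)
  txt \<open>The y_1 y_2 y_3 y_4 coefficient of (x_1 x_2 x_3 x_4 - 1)^4 is 4! = 24, and 17 * 24 - 100 * 4 = 8.\<close>
  moreover have "kadd (ksmul 17 (kpow (xmon_minus_one idx4) 4))
      (kneg (ksmul 100 (kmul (kpow (xmon_minus_one {1, 2}) 2) (kpow (xmon_minus_one {3, 4}) 2))))
      = ksmul 8 (ymon idx4)"
    by (rule kel_eqI_supported_in[where A = idx4], (intro supported_in_intros; simp add: idx4_def)+,
      simp add: kel_eval idx4_def numeral_eq_Suc)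
  ultimately show ?thesis by simp
qed

lemma four_ymon4_in_gamma_filt_of_disjoint_pairs:
  assumes quat: "quat_index_data ind" and pqrs: "distinct [p, q, r, s]" "idx4 = {p, q, r, s}"
    and pairs: "ind {p, q} = 2" "ind {r, s} = 2"
  shows "ksmul 4 (ymon idx4) \<in> gamma_filt ind 4"
proof -
  let ?fs = "[({p, q}, 1, 2), ({r, s}, 1, 2)]"
  have ind: "ind {} = 1" using quat_index_data_empty[OF quat] .
  have "gamma_terms ind ?fs = kmul (kpow (xmon_minus_one {p, q}) 2) (kpow (xmon_minus_one {r, s}) 2)"
    using ind pairs by (simp add: gamma_terms_normalize ibinom_def pqrs(2))
  also have "\<dots> = ksmul 4 (ymon idx4)"
    by (rule kel_eqI_supported_in[where A = idx4], (intro supported_in_intros; simp add: pqrs(2))+,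
      use pqrs(1) in \<open>simp add: kel_eval pqrs(2)\<close>)
  finally show ?thesis
    using gamma_terms_in_gamma_filt[of ind ?fs 4] ind by (simp add: pqrs(2))
qed

section \<open>Index combinatorics\<close>

definition pairs4 :: "nat set list" where
  "pairs4 = [{1, 2}, {1, 3}, {1, 4}, {2, 3}, {2, 4}, {3, 4}]"

lemma Jset_eq_pairs4: "Jset = set pairs4"
proof -
  have "\<forall>P. P \<subseteq> {1, 2, 3, 4::nat} \<longrightarrow> card P = 2 \<longrightarrow> P \<in> set pairs4"
    by (simp only: all_subsets_insert all_subsets_empty) (simp add: pairs4_def)
  moreover have "\<forall>P \<in> set pairs4. P \<subseteq> {1, 2, 3, 4} \<and> card P = 2"
    by (simp add: pairs4_def)
  ultimately show ?thesis unfolding Jset_def idx4_def by blast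
qed

lemma finite_idx4: "finite idx4"
  by (simp add: idx4_def)

lemma triples_of_idx4:
  assumes "T \<subseteq> idx4" "card T = 3"
  shows "T = {1, 2, 3} \<or> T = {1, 2, 4} \<or> T = {1, 3, 4} \<or> T = {2, 3, 4}"
proof -
  have "\<forall>T. T \<subseteq> {1, 2, 3, 4::nat} \<longrightarrow> card T = 3 \<longrightarrow>
      T = {1, 2, 3} \<or> T = {1, 2, 4} \<or> T = {1, 3, 4} \<or> T = {2, 3, 4}"
    by (simp only: all_subsets_insert all_subsets_empty) simp
  with assms show ?thesis unfolding idx4_def by blast
qed

lemma Gset_eq: "Gset ind = {P \<in> set pairs4. ind P = 2}"
  by (simp add: Gset_def Jset_eq_pairs4)

lemma card_pairs4_filter: "card {P \<in> set pairs4. Q P} = length (filter Q pairs4)"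
proof -
  have "distinct pairs4" by (simp add: pairs4_def set_eq_subset)
  then show ?thesis by (simp add: distinct_length_filter Collect_conj_eq Int_commute)
qed

lemma subset_of_card_inter_eq: "finite A \<Longrightarrow> card (B \<inter> A) = card A \<Longrightarrow> A \<subseteq> B"
  using card_subset_eq[of A "B \<inter> A"] by blast

lemma card_Jm: "m \<in> {1, 2, 3} \<Longrightarrow> card (Jm m) = 2"
  by (auto simp: Jm_def J1_def J2_def J3_def doubleton_eq_iff)

lemma Kset_eq: "Kset i = {P \<in> set pairs4. i \<notin> P}"
  by (auto simp: Kset_def Jset_eq_pairs4)

lemma card_Kset: "i \<in> idx4 \<Longrightarrow> card (Kset i) = 3"
  unfolding Kset_eq card_pairs4_filter by (auto simp: idx4_def pairs4_def)

lemma finite_Jm: "finite (Jm m)"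
  by (simp add: Jm_def J1_def J2_def J3_def)

lemma finite_Kset: "finite (Kset i)"
  by (simp add: Kset_eq)

lemma Gset_covers_triples:
  assumes H: "4 \<le> card (Gset ind) \<or> (\<exists>m \<in> {1, 2, 3}. card (Gset ind \<inter> Jm m) = 2)
      \<or> (\<exists>i \<in> idx4. card (Gset ind \<inter> Kset i) = 3)"
    and T: "T \<subseteq> idx4" "card T = 3"
  shows "\<exists>P \<in> Gset ind. P \<subseteq> T"
proof (rule ccontr)
  assume no_pair: "\<not> (\<exists>P \<in> Gset ind. P \<subseteq> T)"
  have T_cases: "T = {1, 2, 3} \<or> T = {1, 2, 4} \<or> T = {1, 3, 4} \<or> T = {2, 3, 4}"
    using triples_of_idx4[OF T] .
  from H consider "4 \<le> card (Gset ind)" | m where "m \<in> {1, 2, 3}" "Jm m \<subseteq> Gset ind"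
    | i where "i \<in> idx4" "Kset i \<subseteq> Gset ind"
    using subset_of_card_inter_eq[OF finite_Jm] subset_of_card_inter_eq[OF finite_Kset]
      card_Jm card_Kset by metis
  then show False
  proof cases
    case 1
    have "Gset ind \<subseteq> {P \<in> set pairs4. \<not> P \<subseteq> T}"
      using no_pair by (auto simp: Gset_eq)
    then have "card (Gset ind) \<le> card {P \<in> set pairs4. \<not> P \<subseteq> T}"
      by (intro card_mono) auto
    also have "\<dots> = 3"
      unfolding card_pairs4_filter using T_cases by (elim disjE; simp add: pairs4_def)
    finally show False using 1 by simp
  next
    case (2 m)
    have "\<exists>P \<in> Jm m. P \<subseteq> T"
      using T_cases 2(1) by (auto simp: Jm_def J1_def J2_def J3_def)
    with 2(2) no_pair show False by blast
  next
    case (3 i)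
    have "\<exists>P \<in> set pairs4. i \<notin> P \<and> P \<subseteq> T"
      using T_cases 3(1) unfolding idx4_def by (elim disjE insertE; simp add: pairs4_def)
    with 3(2) no_pair show False by (auto simp: Kset_eq)
  qed
qed

lemma pair_index_cases:
  assumes quat: "quat_index_data ind" and ge2: "\<forall>S \<subseteq> idx4. 2 \<le> card S \<longrightarrow> 2 \<le> ind S"
    and S: "S \<subseteq> idx4" "card S = 2"
  shows "ind S = 2 \<or> ind S = 4"
proof -
  obtain e where e: "ind S = 2 ^ e" and dvd: "ind S dvd 2 ^ card S"
    using quat S unfolding quat_index_data_def by blast
  have "e \<le> 2" using e dvd S power_dvd_imp_le[of 2 e 2] by simp
  moreover have "2 \<le> ind S" using ge2 S by simp
  then have "e \<noteq> 0" using e by (cases e) auto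
  ultimately have "e = 1 \<or> e = 2" by auto
  with e show ?thesis by auto
qed

lemma ymon3_in_im_res_of_Gset:
  assumes quat: "quat_index_data ind" and T: "T \<subseteq> idx4" "card T = 3"
    and P: "P \<in> Gset ind" "P \<subseteq> T"
  shows "in_im_res ind 3 (ksmul 4 (ymon T))"
proof -
  have "card P = 2" using P(1) by (simp add: Gset_def Jset_def)
  then obtain p q where pq: "P = {p, q}" "p \<noteq> q" by (auto simp: card_2_iff)
  have "card (T - P) = 1"
    using T P(2) \<open>card P = 2\<close> by (simp add: card_Diff_subset finite_subset[OF _ finite_idx4])
  then obtain r where r: "T - P = {r}" by (auto simp: card_1_singleton_iff)
  with P(2) pq have "T = {p, q, r}" "distinct [p, q, r]" by auto
  with T P(1) pq show ?thesis
    using ymon3_in_im_res_of_pair[OF quat, of p q r] by (simp add: Gset_def)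
qed

lemma ymon3_in_im_res_of_total:
  assumes quat: "quat_index_data ind" and total: "ind idx4 = 2"
    and T: "T \<subseteq> idx4" "card T = 3"
  shows "in_im_res ind 3 (ksmul 4 (ymon T))"
proof -
  have perms: "idx4 = {4, 1, 2, 3}" "idx4 = {3, 1, 2, 4}" "idx4 = {2, 1, 3, 4}" "idx4 = {1, 2, 3, 4}"
    by (auto simp: idx4_def)
  from triples_of_idx4[OF T] show ?thesis
    using complement_ymon3_in_im_res_of_total[OF quat _ perms(1) total]
      complement_ymon3_in_im_res_of_total[OF quat _ perms(2) total]
      complement_ymon3_in_im_res_of_total[OF quat _ perms(3) total]
      complement_ymon3_in_im_res_of_total[OF quat _ perms(4) total]
    by (elim disjE) simp_all
qed

lemma all_ymon3_in_im_res:
  assumes quat: "quat_index_data ind"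
    and H: "ind idx4 = 2 \<or> 4 \<le> card (Gset ind) \<or> (\<exists>m \<in> {1, 2, 3}. card (Gset ind \<inter> Jm m) = 2)
      \<or> (\<exists>i \<in> idx4. card (Gset ind \<inter> Kset i) = 3)"
  shows "\<forall>T \<subseteq> idx4. card T = 3 \<longrightarrow> in_im_res ind 3 (ksmul 4 (ymon T))"
proof (intro allI impI)
  fix T assume T: "T \<subseteq> idx4" "card T = 3"
  show "in_im_res ind 3 (ksmul 4 (ymon T))"
  proof (cases "ind idx4 = 2")
    case True
    then show ?thesis using ymon3_in_im_res_of_total[OF quat _ T] by simp
  next
    case False
    with H Gset_covers_triples[OF _ T] obtain P where "P \<in> Gset ind" "P \<subseteq> T" by blast
    then show ?thesis by (rule ymon3_in_im_res_of_Gset[OF quat T])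
  qed
qed

lemma eight_ymon4_in_gamma_filt_of_Gset:
  assumes quat: "quat_index_data ind" and P: "P \<in> Gset ind"
  shows "ksmul 8 (ymon idx4) \<in> gamma_filt ind 4"
proof -
  have perms: "idx4 = {1, 2, 3, 4}" "idx4 = {1, 3, 2, 4}" "idx4 = {1, 4, 2, 3}"
    "idx4 = {2, 3, 1, 4}" "idx4 = {2, 4, 1, 3}" "idx4 = {3, 4, 1, 2}"
    by (auto simp: idx4_def)
  from P show ?thesis
    using eight_ymon4_in_gamma_filt_of_pair[OF quat _ perms(1)] eight_ymon4_in_gamma_filt_of_pair[OF quat _ perms(2)]
      eight_ymon4_in_gamma_filt_of_pair[OF quat _ perms(3)] eight_ymon4_in_gamma_filt_of_pair[OF quat _ perms(4)]
      eight_ymon4_in_gamma_filt_of_pair[OF quat _ perms(5)] eight_ymon4_in_gamma_filt_of_pair[OF quat _ perms(6)]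
    by (auto simp: Gset_eq pairs4_def)
qed

lemma eight_ymon4_in_gamma_filt_of_Hset:
  assumes quat: "quat_index_data ind" and i: "i \<in> Hset ind 2"
  shows "ksmul 8 (ymon idx4) \<in> gamma_filt ind 4"
proof -
  have perms: "idx4 = {2, 3, 4, 1}" "idx4 = {1, 3, 4, 2}" "idx4 = {1, 2, 4, 3}" "idx4 = {1, 2, 3, 4}"
    by (auto simp: idx4_def)
  from i show ?thesis
    using eight_ymon4_in_gamma_filt_of_triple[OF quat _ perms(1)] eight_ymon4_in_gamma_filt_of_triple[OF quat _ perms(2)]
      eight_ymon4_in_gamma_filt_of_triple[OF quat _ perms(3)] eight_ymon4_in_gamma_filt_of_triple[OF quat _ perms(4)]
    unfolding Hset_def idx4_def by (auto simp: insert_Diff_if)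
qed

lemma eight_ymon4_in_gamma_filt:
  assumes quat: "quat_index_data ind" and ge2: "\<forall>S \<subseteq> idx4. 2 \<le> card S \<longrightarrow> 2 \<le> ind S"
    and H: "ind idx4 \<in> {2, 4} \<or> 1 \<le> card (Gset ind) \<or> 1 \<le> card (Hset ind 2)"
  shows "ksmul 8 (ymon idx4) \<in> gamma_filt ind 4"
proof (cases "Gset ind = {}")
  case False
  then obtain P where "P \<in> Gset ind" by blast
  then show ?thesis by (rule eight_ymon4_in_gamma_filt_of_Gset[OF quat])
next
  case no_G: True
  from H no_G consider "ind idx4 = 2" | "ind idx4 = 4" | i where "i \<in> Hset ind 2"
    by fastforce
  then show ?thesis
  proof cases
    case 1
    then show ?thesis by (rule eight_ymon4_in_gamma_filt_of_total[OF quat])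
  next
    case 2
    have "{1, 2} \<in> Jset" "{3, 4} \<in> Jset" by (simp_all add: Jset_eq_pairs4 pairs4_def)
    with no_G have "ind {1, 2} \<noteq> 2" "ind {3, 4} \<noteq> 2" by (auto simp: Gset_def)
    moreover have "ind {1, 2} = 2 \<or> ind {1, 2} = 4" "ind {3, 4} = 2 \<or> ind {3, 4} = 4"
      by (rule pair_index_cases[OF quat ge2]; simp add: idx4_def)+
    ultimately show ?thesis using eight_ymon4_in_gamma_filt_of_total4[OF quat 2] by simp
  next
    case 3
    then show ?thesis by (rule eight_ymon4_in_gamma_filt_of_Hset[OF quat])
  qed
qed

lemma four_ymon4_in_gamma_filt_of_Jm:
  assumes quat: "quat_index_data ind" and m: "m \<in> {1, 2, 3}" "card (Gset ind \<inter> Jm m) = 2"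
  shows "ksmul 4 (ymon idx4) \<in> gamma_filt ind 4"
proof -
  have "Jm m \<subseteq> Gset ind"
    using m by (intro subset_of_card_inter_eq finite_Jm) (simp add: card_Jm)
  moreover have perms: "idx4 = {1, 2, 3, 4}" "idx4 = {1, 3, 2, 4}" "idx4 = {1, 4, 2, 3}"
    by (auto simp: idx4_def)
  ultimately show ?thesis
    using m(1) four_ymon4_in_gamma_filt_of_disjoint_pairs[OF quat _ perms(1)]
      four_ymon4_in_gamma_filt_of_disjoint_pairs[OF quat _ perms(2)]
      four_ymon4_in_gamma_filt_of_disjoint_pairs[OF quat _ perms(3)]
    by (auto simp: Jm_def J1_def J2_def J3_def Gset_def)
qed

theorem lemma4p5:
  fixes ind :: "nat set \<Rightarrow> nat" and i j k l :: nat
  assumes quat: "quat_index_data ind"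
    and ge2: "\<forall>S \<subseteq> idx4. 2 \<le> card S \<longrightarrow> 2 \<le> ind S"
    and ijkl: "distinct [i, j, k, l]" "{i, j, k, l} = idx4"
  shows
    \<comment> \<open>(1)\<close>
    "(ind idx4 = 2 \<longrightarrow> in_im_res ind 2 (ksmul 2 (esym 2)))
   \<and> (ind (idx4 - {l}) = 2 \<longrightarrow>
        in_im_res ind 2 (ksmul 2 (kadd (ymon {i, j}) (kadd (ymon {i, k}) (ymon {j, k})))))
    \<comment> \<open>(2)\<close>
   \<and> (ind {i, j} = 2 \<longrightarrow>
        in_im_res ind 3 (ksmul 4 (ymon {i, j, k})) \<and> in_im_res ind 3 (ksmul 4 (ymon {i, j, l})))
   \<and> (ind (idx4 - {l}) = 2 \<longrightarrow>
        in_im_res ind 3 (ksmul 4 (ymon {i, j, k})) \<and>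
        in_im_res ind 3 (kadd (ksmul (-4) (ymon {i, j, k})) (ksmul 4 (esym 3))))
   \<and> (ind {i, j} = 2 \<and> ind {i, k} = 2 \<longrightarrow>
        in_im_res ind 3 (ksmul 4 (ymon {i, j, k})) \<and> in_im_res ind 3 (ksmul 4 (ymon {i, j, l})) \<and>
        in_im_res ind 3 (ksmul 4 (ymon {i, k, l})))
   \<and> ((ind idx4 = 2 \<or> 4 \<le> card (Gset ind) \<or>
        (\<exists>m \<in> {1, 2, 3}. card (Gset ind \<inter> Jm m) = 2) \<or>
        (\<exists>i' \<in> idx4. card (Gset ind \<inter> Kset i') = 3)) \<longrightarrow>
        (\<forall>T \<subseteq> idx4. card T = 3 \<longrightarrow> in_im_res ind 3 (ksmul 4 (ymon T))))
    \<comment> \<open>(3)\<close>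
   \<and> ((ind idx4 \<in> {2, 4} \<or> 1 \<le> card (Gset ind) \<or> 1 \<le> card (Hset ind 2)) \<longrightarrow>
        ksmul 8 (ymon idx4) \<in> gamma_filt ind 4)
   \<and> ((\<exists>m \<in> {1, 2, 3}. card (Gset ind \<inter> Jm m) = 2) \<longrightarrow>
        ksmul 4 (ymon idx4) \<in> gamma_filt ind 4)"
proof -
  have idx4: "idx4 = {i, j, k, l}" and triple: "idx4 - {l} = {i, j, k}"
    using ijkl by auto
  have sub: "{i, j, k} \<subseteq> idx4" "{i, j, l} \<subseteq> idx4" "{i, k, l} \<subseteq> idx4"
    using ijkl(2) by auto
  have dist: "distinct [i, j, k]" "distinct [i, j, l]" "distinct [i, k, l]"
    using ijkl(1) by auto
  show ?thesis
    unfolding triple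
    using esym2_in_im_res_of_total[OF quat]
      ymon2_sum_in_im_res_of_triple[OF quat dist(1) sub(1)]
      ymon3_in_im_res_of_pair[OF quat dist(1) sub(1)] ymon3_in_im_res_of_pair[OF quat dist(2) sub(2)]
      ymon3_in_im_res_of_pair[OF quat dist(3) sub(3)]
      ymon3_in_im_res_of_triple[OF quat dist(1) sub(1)] esym3_in_im_res_of_triple[OF quat ijkl(1) idx4]
      all_ymon3_in_im_res[OF quat] eight_ymon4_in_gamma_filt[OF quat ge2] four_ymon4_in_gamma_filt_of_Jm[OF quat]
    by blast
qed

end
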